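(* Let $R$ be a noetherian domain and let $I$ be a nonzero ideal of $R$. \begin{enumerate} \item If $J$ is a nonzero ideal of $R$ with $I \subseteq J$ and $J/I \cong R/P$ as $R$-modules for some prime ideal $P \subseteq R$, then $\omega'(I) \le \omega'(J)+1$. \item $\omega'(I) < \infty$. \item $\sup \mathsf L_{\mathcal I(R)}(I) \le \omega'(I)$. In particular, $\mathcal I(R)$ is a BF-monoid. \end{enumerate}
   Context: For a domain $R$, $\mathcal I(R)$ denotes the commutative semigroup of all nonzero ideals of $R$ under ideal multiplication (identity $R$). For a nonzero ideal $I$ of $R$, $\omega'(I) \in \mathbb N_0\cup\{\infty\}$ is the smallest $N$ with the property: whenever $n \in \mathbb N$ and $J_1,\dots,J_n \in \mathcal I(R)$ satisfy $J_1\cdots J_n \subseteq I$, there is a subset $\Omega \subseteq \{1,\dots,n\}$ with $|\Omega|\le N$ and $\prod_{\lambda\in\Omega}J_\lambda \subseteq I$ (the empty product being $R$). A monoid means a commutative semigroup $H$ with identity which is unit-cancellative: if $a,u\in H$ and $a=au$, then $u$ is invertible. $H^\times$ is the group of units. An atom is a non-unit $u$ such that $u=ab$ implies $a\in H^\times$ or $b\in H^\times$. For $a\in H$, $\mathsf L_H(a)\subseteq\mathbb N_0$ is the set of all $\ell$ such that $a=\varepsilon u_1\cdots u_\ell$ with $\varepsilon\in H^\times$ and atoms $u_1,\dots,u_\ell$. $H$ is a BF-monoid if it is unit-cancellative and $\mathsf L_H(a)$ is finite and nonempty for every $a\in H$. *)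

theory Defs
  imports "HOL-Algebra.Ideal_Product" "HOL-Algebra.Ring_Divisibility" "HOL-Library.Extended_Nat"
begin

definition unit_cancellative :: "('a, 'b) monoid_scheme \<Rightarrow> bool" where
  "unit_cancellative H \<longleftrightarrow>
     (\<forall>a \<in> carrier H. \<forall>u \<in> carrier H. a = a \<otimes>\<^bsub>H\<^esub> u \<longrightarrow> u \<in> Units H)"

definition atom :: "('a, 'b) monoid_scheme \<Rightarrow> 'a \<Rightarrow> bool" where
  "atom H u \<longleftrightarrow> u \<in> carrier H \<and> u \<notin> Units H \<and>
     (\<forall>a \<in> carrier H. \<forall>b \<in> carrier H. u = a \<otimes>\<^bsub>H\<^esub> b \<longrightarrow> a \<in> Units H \<or> b \<in> Units H)"

definition list_prod :: "('a, 'b) monoid_scheme \<Rightarrow> 'a list \<Rightarrow> 'a" where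
  "list_prod H us = foldr (\<lambda>u acc. u \<otimes>\<^bsub>H\<^esub> acc) us \<one>\<^bsub>H\<^esub>"

definition lengths :: "('a, 'b) monoid_scheme \<Rightarrow> 'a \<Rightarrow> nat set" where
  "lengths H a = {length us | us. \<exists>\<epsilon> \<in> Units H. (\<forall>u \<in> set us. atom H u) \<and>
                                       a = \<epsilon> \<otimes>\<^bsub>H\<^esub> list_prod H us}"

definition BF_monoid :: "('a, 'b) monoid_scheme \<Rightarrow> bool" where
  "BF_monoid H \<longleftrightarrow> comm_monoid H \<and> unit_cancellative H \<and>
     (\<forall>a \<in> carrier H. finite (lengths H a) \<and> lengths H a \<noteq> {})"

definition nz_ideals :: "('a, 'b) ring_scheme \<Rightarrow> 'a set set" where
  "nz_ideals R = {I. ideal I R \<and> I \<noteq> {\<zero>\<^bsub>R\<^esub>}}"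

definition ideal_monoid :: "('a, 'b) ring_scheme \<Rightarrow> 'a set monoid" where
  "ideal_monoid R = \<lparr> carrier = nz_ideals R, monoid.mult = ideal_prod R, one = carrier R \<rparr>"

definition iprod :: "('a, 'b) ring_scheme \<Rightarrow> (nat \<Rightarrow> 'a set) \<Rightarrow> nat set \<Rightarrow> 'a set" where
  "iprod R J \<Omega> = foldr (\<lambda>i A. ideal_prod R (J i) A) (sorted_list_of_set \<Omega>) (carrier R)"

definition omega_prop :: "('a, 'b) ring_scheme \<Rightarrow> 'a set \<Rightarrow> enat \<Rightarrow> bool" where
  "omega_prop R I N \<longleftrightarrow>
     (\<forall>(n::nat) (J :: nat \<Rightarrow> 'a set). n \<ge> 1 \<longrightarrow> (\<forall>i \<in> {1..n}. J i \<in> nz_ideals R) \<longrightarrow>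
        iprod R J {1..n} \<subseteq> I \<longrightarrow>
        (\<exists>\<Omega> \<subseteq> {1..n}. enat (card \<Omega>) \<le> N \<and> iprod R J \<Omega> \<subseteq> I))"

text \<open>omega'(I): the least such N (infinity if none exists, as Inf {} = infinity in enat).\<close>
definition omega' :: "('a, 'b) ring_scheme \<Rightarrow> 'a set \<Rightarrow> enat" where
  "omega' R I = Inf {N. omega_prop R I N}"

text \<open>J/I is isomorphic to R/P as R-modules (for I subset J): there is a surjective R-linear
  map J \<rightarrow> R/P (given by representatives) with kernel exactly I.\<close>
definition quot_iso_RP :: "('a, 'b) ring_scheme \<Rightarrow> 'a set \<Rightarrow> 'a set \<Rightarrow> 'a set \<Rightarrow> bool" where
  "quot_iso_RP R I J P \<longleftrightarrow> (\<exists>\<phi>. \<phi> \<in> J \<rightarrow> carrier R \<and>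
     (\<forall>x \<in> J. \<forall>y \<in> J. \<phi> (x \<oplus>\<^bsub>R\<^esub> y) \<ominus>\<^bsub>R\<^esub> (\<phi> x \<oplus>\<^bsub>R\<^esub> \<phi> y) \<in> P) \<and>
     (\<forall>r \<in> carrier R. \<forall>x \<in> J. \<phi> (r \<otimes>\<^bsub>R\<^esub> x) \<ominus>\<^bsub>R\<^esub> (r \<otimes>\<^bsub>R\<^esub> \<phi> x) \<in> P) \<and>
     (\<forall>r \<in> carrier R. \<exists>x \<in> J. \<phi> x \<ominus>\<^bsub>R\<^esub> r \<in> P) \<and>
     (\<forall>x \<in> J. \<phi> x \<in> P \<longleftrightarrow> x \<in> I))"

end

theory Submission
  imports Defs
begin

text \<open>For part 1, suppose \<open>J\<^sub>1 \<cdots> J\<^sub>n \<subseteq> I \<subseteq> J\<close>. By \<open>\<omega>'(J)\<close>, a subproduct \<open>X\<close> of at most \<open>\<omega>'(J)\<close>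
  factors lies in \<open>J\<close>; if it is not already in \<open>I\<close>, the product \<open>Y\<close> of the remaining factors
  satisfies \<open>X Y \<subseteq> I\<close>, so \<open>Y \<subseteq> (I : a) = P\<close> for some \<open>a \<in> X - I\<close>, and since \<open>P\<close> is prime one
  factor \<open>J\<^sub>\<mu> \<subseteq> P\<close>; then \<open>J\<^sub>\<mu> X \<subseteq> I\<close>.

  For part 2, take by noetherianity a maximal nonzero \<open>M\<close> with \<open>\<omega>'(M) = \<infinity>\<close>, and among the colon
  ideals \<open>(M : x)\<close>, \<open>x \<notin> M\<close>, a maximal one \<open>(M : x\<^sub>0)\<close>; it is prime, and \<open>J = M + R x\<^sub>0\<close>
  satisfies \<open>J/M \<cong> R/(M : x\<^sub>0)\<close>, so part 1 and the maximality of \<open>M\<close> give a contradiction.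

  For part 3, if \<open>I = U\<^sub>1 \<cdots> U\<^sub>n\<close> with proper nonzero \<open>U\<^sub>i\<close>, no proper subproduct lies in \<open>I\<close>:
  otherwise \<open>A \<subseteq> A B\<close> with \<open>A \<noteq> 0\<close>, and Nakayama's lemma in the noetherian domain forces
  \<open>B = R\<close>. Hence \<open>n \<le> \<omega>'(I)\<close>, and a factorization into proper ideals of maximal length is
  a factorization into atoms.\<close>

definition colon :: "('a, 'b) ring_scheme \<Rightarrow> 'a set \<Rightarrow> 'a \<Rightarrow> 'a set" where
  "colon R K x = {r \<in> carrier R. r \<otimes>\<^bsub>R\<^esub> x \<in> K}"

context cring begin

lemma ideal_prod_subsetI:
  assumes "ideal K R" "\<And>i j. i \<in> A \<Longrightarrow> j \<in> B \<Longrightarrow> i \<otimes> j \<in> K"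
  shows "A \<cdot> B \<subseteq> K"
proof
  fix s assume "s \<in> A \<cdot> B" then show "s \<in> K"
    by (induct s rule: ideal_prod.induct)
       (use assms in \<open>auto intro: additive_subgroup.a_closed[OF ideal.axioms(1)]\<close>)
qed

lemma colon_ideal:
  assumes "ideal K R" "x \<in> carrier R"
  shows "ideal (colon R K x) R"
proof (rule idealI[OF ring_axioms])
  interpret K: ideal K R by fact
  show "subgroup (colon R K x) (add_monoid R)"
  proof
    fix a b assume "a \<in> colon R K x" "b \<in> colon R K x"
    then show "a \<otimes>\<^bsub>add_monoid R\<^esub> b \<in> colon R K x"
      using assms by (simp add: colon_def l_distr)
  next
    fix a assume "a \<in> colon R K x"
    then show "inv\<^bsub>add_monoid R\<^esub> a \<in> colon R K x"
      using assms by (simp add: colon_def a_inv_def[symmetric] l_minus)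
  qed (use assms in \<open>auto simp: colon_def\<close>)
next
  fix a y assume "a \<in> colon R K x" "y \<in> carrier R"
  then show "y \<otimes> a \<in> colon R K x"
    using assms by (simp add: colon_def m_assoc ideal.I_l_closed)
  then show "a \<otimes> y \<in> colon R K x"
    using \<open>a \<in> colon R K x\<close> \<open>y \<in> carrier R\<close> by (simp add: colon_def m_comm)
qed

lemma mem_set_add_cgenideal:
  "x \<in> H <+>\<^bsub>R\<^esub> PIdl y \<longleftrightarrow> (\<exists>h\<in>H. \<exists>t\<in>carrier R. x = h \<oplus> t \<otimes> y)"
  by (auto simp: set_add_def' cgenideal_def)

lemma genideal_insert_subset:
  assumes "A \<subseteq> carrier R" "y \<in> carrier R"
  shows "Idl (insert y A) \<subseteq> Idl A <+>\<^bsub>R\<^esub> PIdl y"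
proof (rule genideal_minimal[OF add_ideals[OF genideal_ideal cgenideal_ideal]])
  have "insert y A \<subseteq> Idl (Idl A \<union> PIdl y)"
    using assms genideal_self[of A] cgenideal_self[of y]
      genideal_self[of "Idl A \<union> PIdl y"] genideal_ideal[of A] cgenideal_ideal[of y]
    by (auto dest: ideal.Icarr)
  then show "insert y A \<subseteq> Idl A <+>\<^bsub>R\<^esub> PIdl y"
    using union_genideal[OF genideal_ideal cgenideal_ideal] assms by simp
qed (use assms in auto)

lemma ideal_prod_genideal_insert_subset:
  assumes "ideal U R" "A \<subseteq> carrier R" "y \<in> carrier R"
  shows "U \<cdot> (Idl (insert y A)) \<subseteq> U \<cdot> (Idl A) <+>\<^bsub>R\<^esub> PIdl y"
proof (rule ideal_prod_subsetI)
  show "ideal (U \<cdot> (Idl A) <+>\<^bsub>R\<^esub> PIdl y) R"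
    using assms by (intro add_ideals ideal_prod_is_ideal genideal_ideal cgenideal_ideal)
next
  fix u m assume u: "u \<in> U" and m: "m \<in> Idl (insert y A)"
  then obtain m' t where m': "m' \<in> Idl A" and t: "t \<in> carrier R" and m_eq: "m = m' \<oplus> t \<otimes> y"
    using subsetD[OF genideal_insert_subset[OF assms(2,3)] m] unfolding mem_set_add_cgenideal by blast
  have "u \<in> carrier R" "m' \<in> carrier R"
    using u m' assms genideal_ideal[OF assms(2)] by (auto dest: ideal.Icarr)
  then have "u \<otimes> m = u \<otimes> m' \<oplus> (u \<otimes> t) \<otimes> y"
    using m_eq t assms(3) by (simp add: r_distr m_assoc)
  moreover have "u \<otimes> m' \<in> U \<cdot> (Idl A)" using u m' by (rule ideal_prod.prod)
  ultimately show "u \<otimes> m \<in> U \<cdot> (Idl A) <+>\<^bsub>R\<^esub> PIdl y"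
    using \<open>u \<in> carrier R\<close> t by (auto simp: mem_set_add_cgenideal)
qed

lemma mult_ideal_prod_mem_set_add:
  assumes U: "ideal U R" and K: "ideal K R" and M: "ideal M R"
    and r: "r \<in> carrier R" and y: "y \<in> carrier R"
    and rM: "\<forall>x\<in>M. r \<otimes> x \<in> K <+>\<^bsub>R\<^esub> PIdl y" and s: "s \<in> U \<cdot> M"
  shows "\<exists>k\<in>K. \<exists>b\<in>U. r \<otimes> s = k \<oplus> b \<otimes> y"
  using s
proof (induct s rule: ideal_prod.induct)
  case (prod u m)
  obtain k t where k: "k \<in> K" and t: "t \<in> carrier R" and rm: "r \<otimes> m = k \<oplus> t \<otimes> y"
    using rM prod by (auto simp: mem_set_add_cgenideal)
  have uc: "u \<in> carrier R" and mc: "m \<in> carrier R" and kc: "k \<in> carrier R"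
    using U M K prod k by (auto dest: ideal.Icarr)
  have "r \<otimes> (u \<otimes> m) = u \<otimes> (r \<otimes> m)" using uc mc r by (simp add: m_lcomm)
  also have "\<dots> = u \<otimes> k \<oplus> (u \<otimes> t) \<otimes> y" using rm uc kc t y by (simp add: r_distr m_assoc)
  finally show ?case
    using ideal.I_l_closed[OF K k uc] ideal.I_r_closed[OF U prod(1) t] by blast
next
  case (sum s1 s2)
  then obtain k1 b1 k2 b2 where k: "k1 \<in> K" "k2 \<in> K" and b: "b1 \<in> U" "b2 \<in> U"
    and e1: "r \<otimes> s1 = k1 \<oplus> b1 \<otimes> y" and e2: "r \<otimes> s2 = k2 \<oplus> b2 \<otimes> y" by blast
  have "s1 \<in> carrier R" "s2 \<in> carrier R"
    using sum ideal_prod_in_carrier[OF U M] by auto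
  then have "r \<otimes> (s1 \<oplus> s2) = (k1 \<oplus> b1 \<otimes> y) \<oplus> (k2 \<oplus> b2 \<otimes> y)"
    using r by (simp add: r_distr e1 e2)
  also have "\<dots> = (k1 \<oplus> k2) \<oplus> (b1 \<oplus> b2) \<otimes> y"
    using k b K U y by (simp add: l_distr a_ac ideal.Icarr)
  finally show ?case
    using additive_subgroup.a_closed[OF ideal.axioms(1)[OF K] k]
      additive_subgroup.a_closed[OF ideal.axioms(1)[OF U] b] by blast
qed

lemma nakayama_insert_step:
  assumes U: "ideal U R" and K: "ideal K R" and M: "ideal M R"
    and y: "y \<in> M" "y \<in> U \<cdot> M <+>\<^bsub>R\<^esub> K"
    and r: "r \<in> carrier R" "\<one> \<ominus> r \<in> U" and rM: "\<forall>x\<in>M. r \<otimes> x \<in> K <+>\<^bsub>R\<^esub> PIdl y"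
  shows "\<exists>r'\<in>carrier R. \<one> \<ominus> r' \<in> U \<and> (\<forall>x\<in>M. r' \<otimes> x \<in> K)"
proof -
  have yc: "y \<in> carrier R" using M y by (auto dest: ideal.Icarr)
  obtain s k0 where s: "s \<in> U \<cdot> M" and k0: "k0 \<in> K" and y_eq: "y = s \<oplus> k0"
    using y(2) unfolding set_add_def' by blast
  obtain k b where k: "k \<in> K" and b: "b \<in> U" and rs: "r \<otimes> s = k \<oplus> b \<otimes> y"
    using mult_ideal_prod_mem_set_add[OF U K M r(1) yc rM s] by blast
  have sc: "s \<in> carrier R" using s ideal_prod_in_carrier[OF U M] by auto
  have c: "k0 \<in> carrier R" "k \<in> carrier R" "b \<in> carrier R"
    using k0 k b K U by (auto dest: ideal.Icarr)
  \<comment> \<open>\<open>r \<ominus> b\<close> kills \<open>y\<close> modulo \<open>K\<close>, hence kills all of \<open>K <+> PIdl y\<close> modulo \<open>K\<close>.\<close>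
  have "(r \<ominus> b) \<otimes> y = r \<otimes> y \<ominus> b \<otimes> y" using r c yc by algebra
  also have "\<dots> = (r \<otimes> s \<oplus> r \<otimes> k0) \<ominus> b \<otimes> y" using y_eq sc c r by (simp add: r_distr)
  also have "\<dots> = k \<oplus> r \<otimes> k0" unfolding rs using c r yc by algebra
  finally have ry: "(r \<ominus> b) \<otimes> y \<in> K"
    using additive_subgroup.a_closed[OF ideal.axioms(1)[OF K] k ideal.I_l_closed[OF K k0 r(1)]] by simp
  have rbc: "r \<ominus> b \<in> carrier R" using r c by simp
  have "\<one> \<ominus> (r \<ominus> b) \<otimes> r = (\<one> \<ominus> r) \<otimes> (\<one> \<oplus> r) \<oplus> b \<otimes> r" using r c by algebra
  moreover have "(\<one> \<ominus> r) \<otimes> (\<one> \<oplus> r) \<oplus> b \<otimes> r \<in> U"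
    using additive_subgroup.a_closed[OF ideal.axioms(1)[OF U]
        ideal.I_r_closed[OF U r(2)] ideal.I_r_closed[OF U b r(1)]] r by simp
  moreover have "(r \<ominus> b) \<otimes> r \<otimes> x \<in> K" if x: "x \<in> M" for x
  proof -
    obtain k t where k: "k \<in> K" and t: "t \<in> carrier R" and rx: "r \<otimes> x = k \<oplus> t \<otimes> y"
      using rM x unfolding mem_set_add_cgenideal by blast
    have "x \<in> carrier R" "k \<in> carrier R" using x k M K by (auto dest: ideal.Icarr)
    then have "(r \<ominus> b) \<otimes> r \<otimes> x = (r \<ominus> b) \<otimes> k \<oplus> t \<otimes> ((r \<ominus> b) \<otimes> y)"
      using rbc r t yc by (simp add: m_assoc rx r_distr m_lcomm)
    then show ?thesis
      using additive_subgroup.a_closed[OF ideal.axioms(1)[OF K]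
          ideal.I_l_closed[OF K k rbc] ideal.I_l_closed[OF K ry t]] by simp
  qed
  ultimately show ?thesis using rbc r by (intro bexI[of _ "(r \<ominus> b) \<otimes> r"]) auto
qed

lemma nakayama:
  assumes "finite A" "A \<subseteq> carrier R" "ideal U R" "ideal K R" "A \<subseteq> U \<cdot> (Idl A) <+>\<^bsub>R\<^esub> K"
  shows "\<exists>r\<in>carrier R. \<one> \<ominus> r \<in> U \<and> (\<forall>x\<in>Idl A. r \<otimes> x \<in> K)"
  using assms
proof (induct A arbitrary: K rule: finite_induct)
  case empty
  have "Idl {} \<subseteq> K" using genideal_minimal[OF empty.prems(3)] by simp
  moreover have "\<one> \<ominus> \<one> \<in> U"
    using additive_subgroup.zero_closed[OF ideal.axioms(1)[OF empty.prems(2)]] by (simp add: a_minus_def r_neg)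
  moreover have "Idl {} \<subseteq> carrier R" using genideal_ideal[of "{}"] by (auto dest: ideal.Icarr)
  ultimately show ?case by (intro bexI[of _ \<one>]) (auto simp: subset_iff)
next
  case (insert y A)
  have yc: "y \<in> carrier R" and Ac: "A \<subseteq> carrier R" and U: "ideal U R" and K: "ideal K R"
    using insert.prems by auto
  define K' where "K' = K <+>\<^bsub>R\<^esub> PIdl y"
  have K': "ideal K' R" unfolding K'_def using K cgenideal_ideal[OF yc] by (rule add_ideals)
  have "A \<subseteq> U \<cdot> (Idl A) <+>\<^bsub>R\<^esub> K'"
  proof
    fix x assume "x \<in> A"
    then obtain s k where s: "s \<in> U \<cdot> (Idl (insert y A))" and k: "k \<in> K" and x: "x = s \<oplus> k"
      using insert.prems(4) unfolding set_add_def' by blast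
    obtain s' t where s': "s' \<in> U \<cdot> (Idl A)" and t: "t \<in> carrier R" and s_eq: "s = s' \<oplus> t \<otimes> y"
      using subsetD[OF ideal_prod_genideal_insert_subset[OF U Ac yc] s]
      unfolding mem_set_add_cgenideal by blast
    have "s' \<in> carrier R" "k \<in> carrier R"
      using s' k K ideal_prod_in_carrier[OF U genideal_ideal[OF Ac]] by (auto dest: ideal.Icarr)
    then have "x = s' \<oplus> (k \<oplus> t \<otimes> y)" using x s_eq t yc by (simp add: a_ac)
    moreover have "k \<oplus> t \<otimes> y \<in> K'" unfolding K'_def mem_set_add_cgenideal using k t by blast
    ultimately show "x \<in> U \<cdot> (Idl A) <+>\<^bsub>R\<^esub> K'" using s' unfolding set_add_def' by blast
  qed
  then obtain r where r: "r \<in> carrier R" "\<one> \<ominus> r \<in> U" and rA: "\<forall>x\<in>Idl A. r \<otimes> x \<in> K'"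
    using insert.hyps(3)[OF Ac U K'] by blast
  have "Idl (insert y A) \<subseteq> colon R K' r"
  proof (rule genideal_minimal[OF colon_ideal[OF K' r(1)]])
    have "y \<otimes> r \<in> K'"
      unfolding K'_def mem_set_add_cgenideal
      using additive_subgroup.zero_closed[OF ideal.axioms(1)[OF K]] r(1) yc by (force simp: m_comm)
    moreover have "a \<otimes> r \<in> K'" if "a \<in> A" for a
    proof -
      have "a \<in> carrier R" "a \<in> Idl A" using that Ac genideal_self[OF Ac] by auto
      then show ?thesis using rA r(1) m_comm[of a r] by simp
    qed
    ultimately show "insert y A \<subseteq> colon R K' r" using yc Ac by (auto simp: colon_def)
  qed
  then have "\<forall>x\<in>Idl (insert y A). r \<otimes> x \<in> K <+>\<^bsub>R\<^esub> PIdl y"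
    using r(1) by (auto simp: colon_def K'_def m_comm)
  moreover have "y \<in> Idl (insert y A)" using genideal_self[OF insert.prems(1)] by blast
  ultimately show ?case
    using nakayama_insert_step[OF U K genideal_ideal[OF insert.prems(1)] _ _ r] insert.prems(4)
    by blast
qed

lemma ideal_add_mem_iff:
  assumes "ideal M R" "u \<in> M" "v \<in> carrier R"
  shows "u \<oplus> v \<in> M \<longleftrightarrow> v \<in> M"
proof
  interpret M: ideal M R by fact
  show "u \<oplus> v \<in> M" if "v \<in> M" using M.a_closed[OF assms(2) that] .
  assume "u \<oplus> v \<in> M"
  moreover have "v = \<ominus> u \<oplus> (u \<oplus> v)" using M.Icarr[OF assms(2)] assms(3) by algebra
  ultimately show "v \<in> M" using M.a_closed[OF M.a_inv_closed[OF assms(2)]] by metis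
qed

lemma primeideal_mult_mem_iff:
  assumes P: "primeideal P R" and "a \<in> carrier R" "b \<in> carrier R"
  shows "a \<otimes> b \<in> P \<longleftrightarrow> a \<in> P \<or> b \<in> P"
proof
  show "a \<in> P \<or> b \<in> P" if "a \<otimes> b \<in> P" using primeideal.I_prime[OF P assms(2,3) that] .
  have "ideal P R" using P by (rule primeideal.axioms(1))
  then show "a \<otimes> b \<in> P" if "a \<in> P \<or> b \<in> P"
    using that ideal.I_r_closed[of P R a b] ideal.I_l_closed[of P R b a] assms(2,3) by blast
qed

lemma colon_maximal_primeideal:
  assumes M: "ideal M R" and x0: "x0 \<in> carrier R" "x0 \<notin> M"
    and maximal: "\<And>x. x \<in> carrier R \<Longrightarrow> x \<notin> M \<Longrightarrow> colon R M x0 \<subseteq> colon R M x \<Longrightarrow> colon R M x = colon R M x0"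
  shows "primeideal (colon R M x0) R"
proof (rule primeidealI[OF colon_ideal[OF M x0(1)] is_cring])
  show "carrier R \<noteq> colon R M x0"
  proof
    assume "carrier R = colon R M x0"
    then have "\<one> \<in> colon R M x0" using one_closed by blast
    then show False using x0 by (simp add: colon_def)
  qed
next
  fix a b assume a: "a \<in> carrier R" and b: "b \<in> carrier R" and ab: "a \<otimes> b \<in> colon R M x0"
  show "a \<in> colon R M x0 \<or> b \<in> colon R M x0"
  proof (cases "a \<in> colon R M x0")
    case False
    then have ax: "a \<otimes> x0 \<notin> M" using a by (simp add: colon_def)
    have "colon R M x0 \<subseteq> colon R M (a \<otimes> x0)"
    proof
      fix r assume "r \<in> colon R M x0"
      then have r: "r \<in> carrier R" "r \<otimes> x0 \<in> M" by (auto simp: colon_def)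
      then have "r \<otimes> (a \<otimes> x0) = a \<otimes> (r \<otimes> x0)" using a x0(1) by (simp add: m_lcomm)
      then show "r \<in> colon R M (a \<otimes> x0)" using ideal.I_l_closed[OF M r(2) a] r(1) by (simp add: colon_def)
    qed
    then have eq: "colon R M (a \<otimes> x0) = colon R M x0" using maximal ax a x0 by simp
    have "b \<otimes> (a \<otimes> x0) = (a \<otimes> b) \<otimes> x0" using a b x0 by (simp add: m_ac)
    then have "b \<in> colon R M (a \<otimes> x0)" using ab b by (simp add: colon_def)
    then show ?thesis using eq by simp
  qed simp
qed

end

context noetherian_domain begin

lemma ideal_prod_absorbs_imp_carrier:
  assumes A: "ideal A R" "A \<noteq> {\<zero>}" and U: "ideal U R" and absorb: "A \<subseteq> A \<cdot> U"
  shows "U = carrier R"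
proof -
  obtain S where S: "S \<subseteq> carrier R" "finite S" "A = Idl S"
    using finetely_gen[OF A(1)] by blast
  have "S \<subseteq> U \<cdot> (Idl S) <+>\<^bsub>R\<^esub> {\<zero>}"
  proof
    fix x assume "x \<in> S"
    then have "x \<in> U \<cdot> (Idl S)" "x = x \<oplus> \<zero>"
      using absorb S genideal_self ideal_prod_commute[OF A(1) U] by auto
    then show "x \<in> U \<cdot> (Idl S) <+>\<^bsub>R\<^esub> {\<zero>}" unfolding set_add_def' by blast
  qed
  then obtain r where r: "r \<in> carrier R" "\<one> \<ominus> r \<in> U" and rA: "\<forall>x\<in>A. r \<otimes> x = \<zero>"
    using nakayama[OF S(2,1) U zeroideal] S(3) by auto
  obtain a where a: "a \<in> A" "a \<noteq> \<zero>"
    using A additive_subgroup.zero_closed[OF ideal.axioms(1)] by blast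
  then have "r = \<zero>" using rA r(1) integral ideal.Icarr[OF A(1)] by blast
  then have "\<one> \<in> U" using r(2) by (simp add: a_minus_def)
  then show ?thesis using ideal.one_imp_carrier[OF U] by simp
qed

end

lemma (in noetherian_ring) ideal_family_has_maximal:
  assumes "F \<noteq> {}" "F \<subseteq> {I. ideal I R}"
  shows "\<exists>M\<in>F. \<forall>X\<in>F. M \<subseteq> X \<longrightarrow> X = M"
proof (rule subset_Zorn_nonempty[OF assms(1)])
  fix C assume C: "C \<noteq> {}" "subset.chain F C"
  then have "subset.chain {I. ideal I R} C"
    using assms(2) unfolding pred_on.chain_def by auto
  then have "\<Union>C \<in> C" by (rule ideal_chain_is_trivial[OF C(1)])
  then show "\<Union>C \<in> F" using C(2) unfolding pred_on.chain_def by auto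
qed

lemma omega_prop_omega':
  assumes "omega' R I = enat N"
  shows "omega_prop R I (enat N)"
proof -
  have "\<exists>M. omega_prop R I M"
    using assms unfolding omega'_def Inf_enat_def by (auto split: if_splits)
  then have "omega_prop R I (omega' R I)"
    unfolding omega'_def Inf_enat_def by (auto intro: LeastI_ex)
  then show ?thesis using assms by simp
qed

lemma omega'_le: "omega_prop R I M \<Longrightarrow> omega' R I \<le> M"
  unfolding omega'_def by (rule Inf_lower) simp

text \<open>The condition says that \<open>(I : a) = P\<close> for every \<open>a \<in> J - I\<close>; it is all that is used
  of an isomorphism \<open>J/I \<cong> R/P\<close>.\<close>
definition uniform_colon :: "('a, 'b) ring_scheme \<Rightarrow> 'a set \<Rightarrow> 'a set \<Rightarrow> 'a set \<Rightarrow> bool" where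
  "uniform_colon R I J P \<longleftrightarrow>
     (\<forall>a\<in>J. \<forall>r\<in>carrier R. r \<otimes>\<^bsub>R\<^esub> a \<in> I \<longleftrightarrow> r \<in> P \<or> a \<in> I)"

context cring begin

lemma iprod_empty: "iprod R J {} = carrier R"
  by (simp add: iprod_def)

lemma iprod_cong:
  "finite \<Omega> \<Longrightarrow> (\<And>i. i \<in> \<Omega> \<Longrightarrow> J i = J' i) \<Longrightarrow> iprod R J \<Omega> = iprod R J' \<Omega>"
  unfolding iprod_def by (rule foldr_cong) auto

lemma ideal_foldr_ideal_prod:
  "\<forall>i \<in> set xs. ideal (J i) R \<Longrightarrow> ideal (foldr (\<lambda>i A. J i \<cdot> A) xs (carrier R)) R"
  by (induct xs) (auto simp: oneideal ideal_prod_is_ideal)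

lemma iprod_ideal:
  "finite \<Omega> \<Longrightarrow> \<forall>i \<in> \<Omega>. ideal (J i) R \<Longrightarrow> ideal (iprod R J \<Omega>) R"
  unfolding iprod_def by (intro ideal_foldr_ideal_prod) auto

lemma foldr_ideal_prod_insort:
  assumes "\<forall>i \<in> set (x # xs). ideal (J i) R"
  shows "foldr (\<lambda>i A. J i \<cdot> A) (insort x xs) (carrier R) = J x \<cdot> foldr (\<lambda>i A. J i \<cdot> A) xs (carrier R)"
  using assms
proof (induct xs)
  case (Cons y ys)
  define F where "F = foldr (\<lambda>i A. J i \<cdot> A) ys (carrier R)"
  have "ideal F R" "ideal (J x) R" "ideal (J y) R"
    using Cons.prems unfolding F_def by (auto intro: ideal_foldr_ideal_prod)
  then have "J y \<cdot> (J x \<cdot> F) = J x \<cdot> (J y \<cdot> F)"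
    by (metis ideal_prod_assoc ideal_prod_commute)
  then show ?case using Cons unfolding F_def by simp
qed simp

lemma iprod_insert:
  assumes "finite \<Omega>" "i \<notin> \<Omega>" "\<forall>j \<in> insert i \<Omega>. ideal (J j) R"
  shows "iprod R J (insert i \<Omega>) = J i \<cdot> iprod R J \<Omega>"
  unfolding iprod_def using assms by (simp add: foldr_ideal_prod_insort)

lemma iprod_union:
  assumes "finite A" "finite B" "A \<inter> B = {}" "\<forall>j \<in> A \<union> B. ideal (J j) R"
  shows "iprod R J (A \<union> B) = iprod R J A \<cdot> iprod R J B"
  using assms
proof (induct A rule: finite_induct)
  case empty
  then have B: "ideal (iprod R J B) R" by (simp add: iprod_ideal)
  show ?case using ideal_prod_commute[OF oneideal B] ideal_prod_one[OF B] by (simp add: iprod_empty)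
next
  case (insert x F)
  have "iprod R J (insert x F \<union> B) = J x \<cdot> iprod R J (F \<union> B)"
    using insert iprod_insert[of "F \<union> B" x J] by simp
  also have "\<dots> = J x \<cdot> (iprod R J F \<cdot> iprod R J B)"
    using insert by auto
  also have "\<dots> = (J x \<cdot> iprod R J F) \<cdot> iprod R J B"
    using insert by (intro ideal_prod_assoc[symmetric] iprod_ideal) auto
  also have "\<dots> = iprod R J (insert x F) \<cdot> iprod R J B"
    using insert by (simp add: iprod_insert)
  finally show ?case .
qed

lemma iprod_subset_factor:
  assumes "finite \<Omega>" "i \<in> \<Omega>" "\<forall>j \<in> \<Omega>. ideal (J j) R"
  shows "iprod R J \<Omega> \<subseteq> J i"
proof -
  have "iprod R J \<Omega> = J i \<cdot> iprod R J (\<Omega> - {i})"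
    using assms iprod_insert[of "\<Omega> - {i}" i J] insert_Diff[OF assms(2)] by auto
  also have "\<dots> \<subseteq> J i"
    using assms iprod_ideal[of "\<Omega> - {i}" J] ideal_prod_inter[of "J i"] by auto
  finally show ?thesis .
qed

lemma iprod_subset_primeideal:
  assumes "finite C" "\<forall>j \<in> C. ideal (J j) R" "primeideal P R" "iprod R J C \<subseteq> P"
  shows "\<exists>\<mu>\<in>C. J \<mu> \<subseteq> P"
  using assms
proof (induct C rule: finite_induct)
  case empty
  then show ?case
    using primeideal.I_notcarr[OF assms(3)] ideal.Icarr[OF primeideal.axioms(1)[OF assms(3)]]
    by (auto simp: iprod_empty)
next
  case (insert x F)
  then have "J x \<subseteq> P \<or> iprod R J F \<subseteq> P"
    by (intro primeideal_divides_ideal_prod[OF assms(3)] iprod_ideal) (auto simp: iprod_insert)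
  then show ?case using insert by auto
qed

lemma quot_iso_RP_imp_uniform_colon:
  assumes "ideal J R" "primeideal P R" "quot_iso_RP R I J P"
  shows "uniform_colon R I J P"
  unfolding uniform_colon_def
proof (intro ballI)
  fix a r assume a: "a \<in> J" and r: "r \<in> carrier R"
  obtain \<phi> where \<phi>: "\<phi> \<in> J \<rightarrow> carrier R"
    and linear: "\<forall>r \<in> carrier R. \<forall>x \<in> J. \<phi> (r \<otimes> x) \<ominus> r \<otimes> \<phi> x \<in> P"
    and kernel: "\<forall>x \<in> J. \<phi> x \<in> P \<longleftrightarrow> x \<in> I"
    using assms(3) unfolding quot_iso_RP_def by blast
  have ra: "r \<otimes> a \<in> J" using ideal.I_l_closed[OF assms(1) a r] .
  have c: "\<phi> a \<in> carrier R" "\<phi> (r \<otimes> a) \<in> carrier R" using a ra \<phi> by auto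
  have "r \<otimes> a \<in> I \<longleftrightarrow> \<phi> (r \<otimes> a) \<in> P" using kernel ra by blast
  also have "\<dots> \<longleftrightarrow> (\<phi> (r \<otimes> a) \<ominus> r \<otimes> \<phi> a) \<oplus> r \<otimes> \<phi> a \<in> P"
    using c r by (simp add: a_minus_def a_assoc l_neg)
  also have "\<dots> \<longleftrightarrow> r \<otimes> \<phi> a \<in> P"
    using linear a r c by (intro ideal_add_mem_iff[OF primeideal.axioms(1)[OF assms(2)]]) auto
  also have "\<dots> \<longleftrightarrow> r \<in> P \<or> a \<in> I"
    using primeideal_mult_mem_iff[OF assms(2) r c(1)] kernel a by blast
  finally show "r \<otimes> a \<in> I \<longleftrightarrow> r \<in> P \<or> a \<in> I" .
qed

lemma uniform_colon_factor_subset: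
  assumes "uniform_colon R I J P" "ideal X R" "ideal Y R"
    and "X \<subseteq> J" "\<not> X \<subseteq> I" "X \<cdot> Y \<subseteq> I"
  shows "Y \<subseteq> P"
proof
  fix b assume b: "b \<in> Y"
  obtain a where a: "a \<in> X" "a \<notin> I" using assms(5) by blast
  have "a \<otimes> b \<in> I" using ideal_prod.prod[OF a(1) b, of R] assms(6) by blast
  then have "b \<otimes> a \<in> I"
    using m_comm[OF ideal.Icarr[OF assms(2) a(1)] ideal.Icarr[OF assms(3) b]] by simp
  moreover have "a \<in> J" "b \<in> carrier R" using a assms(4) ideal.Icarr[OF assms(3) b] by auto
  ultimately show "b \<in> P" using assms(1) a(2) unfolding uniform_colon_def by blast
qed

lemma uniform_colon_prod_subset:
  assumes "uniform_colon R I J P" "ideal I R" "Y \<subseteq> P" "Y \<subseteq> carrier R" "X \<subseteq> J"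
  shows "Y \<cdot> X \<subseteq> I"
proof (rule ideal_prod_subsetI[OF assms(2)])
  fix p x assume "p \<in> Y" "x \<in> X"
  then have "x \<in> J" "p \<in> carrier R" "p \<in> P" using assms(3-5) by auto
  then show "p \<otimes> x \<in> I" using assms(1) unfolding uniform_colon_def by blast
qed

lemma uniform_colon_set_add_cgenideal:
  assumes M: "ideal M R" and x0: "x0 \<in> carrier R" and Q: "primeideal (colon R M x0) R"
  shows "uniform_colon R M (M <+>\<^bsub>R\<^esub> PIdl x0) (colon R M x0)"
  unfolding uniform_colon_def
proof (intro ballI)
  fix a r assume a: "a \<in> M <+>\<^bsub>R\<^esub> PIdl x0" and r: "r \<in> carrier R"
  obtain m t where m: "m \<in> M" and t: "t \<in> carrier R" and a_eq: "a = m \<oplus> t \<otimes> x0"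
    using a unfolding mem_set_add_cgenideal by blast
  have mc: "m \<in> carrier R" using ideal.Icarr[OF M m] .
  have "r \<otimes> a = r \<otimes> m \<oplus> (r \<otimes> t) \<otimes> x0" using a_eq mc t r x0 by (simp add: r_distr m_assoc)
  then have "r \<otimes> a \<in> M \<longleftrightarrow> r \<otimes> t \<in> colon R M x0"
    using ideal_add_mem_iff[OF M ideal.I_l_closed[OF M m r]] r t x0 by (simp add: colon_def)
  also have "\<dots> \<longleftrightarrow> r \<in> colon R M x0 \<or> t \<in> colon R M x0"
    by (rule primeideal_mult_mem_iff[OF Q r t])
  also have "t \<in> colon R M x0 \<longleftrightarrow> a \<in> M"
    using ideal_add_mem_iff[OF M m, of "t \<otimes> x0"] a_eq t x0 by (simp add: colon_def)
  finally show "r \<otimes> a \<in> M \<longleftrightarrow> r \<in> colon R M x0 \<or> a \<in> M" .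
qed

lemma omega'_carrier: "omega' R (carrier R) = 0"
proof -
  have "omega_prop R (carrier R) 0"
    unfolding omega_prop_def by (intro allI impI exI[of _ "{}"]) (auto simp: iprod_empty zero_enat_def)
  then show ?thesis using omega'_le[of R "carrier R" 0] by simp
qed

lemma omega_prop_Suc:
  assumes I: "ideal I R" and IJ: "I \<subseteq> J" and P: "primeideal P R"
    and colon: "uniform_colon R I J P" and J: "omega_prop R J (enat N)"
  shows "omega_prop R I (enat (Suc N))"
  unfolding omega_prop_def
proof (intro allI impI)
  fix n :: nat and Js :: "nat \<Rightarrow> 'a set"
  assume n: "n \<ge> 1" and nz: "\<forall>i\<in>{1..n}. Js i \<in> nz_ideals R" and sub: "iprod R Js {1..n} \<subseteq> I"
  have ids: "\<forall>i\<in>{1..n}. ideal (Js i) R" using nz by (auto simp: nz_ideals_def)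
  obtain \<Omega> where \<Omega>: "\<Omega> \<subseteq> {1..n}" "card \<Omega> \<le> N" "iprod R Js \<Omega> \<subseteq> J"
    using J sub IJ n nz unfolding omega_prop_def by (metis enat_ord_simps(1) order.trans)
  have fin: "finite \<Omega>" using \<Omega>(1) finite_subset by blast
  show "\<exists>\<Omega>\<subseteq>{1..n}. enat (card \<Omega>) \<le> enat (Suc N) \<and> iprod R Js \<Omega> \<subseteq> I"
  proof (cases "iprod R Js \<Omega> \<subseteq> I")
    case True
    then show ?thesis using \<Omega> by (intro exI[of _ \<Omega>]) auto
  next
    case False
    define C where "C = {1..n} - \<Omega>"
    have idC: "\<forall>i\<in>C. ideal (Js i) R" and idO: "\<forall>i\<in>\<Omega>. ideal (Js i) R"
      using ids \<Omega>(1) by (auto simp: C_def)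
    have "iprod R Js \<Omega> \<cdot> iprod R Js C \<subseteq> I"
      using iprod_union[of \<Omega> C Js] sub fin ids \<Omega>(1) by (simp add: C_def Un_absorb1)
    then have "iprod R Js C \<subseteq> P"
      using uniform_colon_factor_subset[OF colon _ _ \<Omega>(3) False] fin idC idO
      by (simp add: C_def iprod_ideal)
    then obtain \<mu> where \<mu>: "\<mu> \<in> C" "Js \<mu> \<subseteq> P"
      using iprod_subset_primeideal[OF _ idC P] by (auto simp: C_def)
    have "iprod R Js (insert \<mu> \<Omega>) = Js \<mu> \<cdot> iprod R Js \<Omega>"
      using \<mu>(1) fin idC idO by (intro iprod_insert) (auto simp: C_def)
    also have "\<dots> \<subseteq> I"
      using uniform_colon_prod_subset[OF colon I \<mu>(2) _ \<Omega>(3)] \<mu>(1) idC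
      by (auto dest: ideal.Icarr)
    finally show ?thesis
      using \<Omega> \<mu>(1) fin by (intro exI[of _ "insert \<mu> \<Omega>"]) (auto simp: C_def)
  qed
qed

lemma omega'_le_Suc:
  assumes "ideal I R" "I \<subseteq> J" "primeideal P R" "uniform_colon R I J P"
  shows "omega' R I \<le> omega' R J + 1"
proof (cases "omega' R J")
  case (enat N)
  then have "omega' R I \<le> enat (Suc N)"
    using omega'_le omega_prop_Suc[OF assms omega_prop_omega'] by blast
  then show ?thesis using enat by (simp add: eSuc_enat[symmetric] eSuc_plus_1)
qed simp

end

lemma ideal_monoid_simps:
  "carrier (ideal_monoid R) = nz_ideals R"
  "x \<otimes>\<^bsub>ideal_monoid R\<^esub> y = ideal_prod R x y"
  "\<one>\<^bsub>ideal_monoid R\<^esub> = carrier R"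
  by (simp_all add: ideal_monoid_def)

lemma list_prod_ideal_monoid_simps:
  "list_prod (ideal_monoid R) [] = carrier R"
  "list_prod (ideal_monoid R) (u # us) = ideal_prod R u (list_prod (ideal_monoid R) us)"
  by (simp_all add: list_prod_def ideal_monoid_def)

context cring begin

lemma ideal_list_prod:
  "\<forall>u\<in>set us. ideal u R \<Longrightarrow> ideal (list_prod (ideal_monoid R) us) R"
  by (induct us) (auto simp: list_prod_ideal_monoid_simps oneideal ideal_prod_is_ideal)

lemma iprod_nth_eq_list_prod:
  "\<forall>u\<in>set us. ideal u R \<Longrightarrow>
     iprod R (\<lambda>i. us ! (i - Suc k)) {Suc k..k + length us} = list_prod (ideal_monoid R) us"
proof (induct us arbitrary: k)
  case Nil
  then show ?case by (simp add: iprod_empty list_prod_ideal_monoid_simps)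
next
  case (Cons u us)
  define J where "J = (\<lambda>i. (u # us) ! (i - Suc k))"
  have range: "{Suc k..k + length (u # us)} = insert (Suc k) {Suc (Suc k)..Suc k + length us}" by auto
  have "J j \<in> set (u # us)" if "j \<in> {Suc k..k + length (u # us)}" for j
    using that unfolding J_def by (intro nth_mem) auto
  then have "iprod R J {Suc k..k + length (u # us)} = u \<cdot> iprod R J {Suc (Suc k)..Suc k + length us}"
    using Cons.prems unfolding range by (subst iprod_insert) (auto simp: J_def)
  also have "iprod R J {Suc (Suc k)..Suc k + length us}
      = iprod R (\<lambda>i. us ! (i - Suc (Suc k))) {Suc (Suc k)..Suc k + length us}"
    by (rule iprod_cong) (auto simp: J_def Suc_diff_Suc)
  also have "\<dots> = list_prod (ideal_monoid R) us" using Cons.hyps[of "Suc k"] Cons.prems by simp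
  finally show ?case by (simp add: J_def list_prod_ideal_monoid_simps)
qed

end

definition proper_factorizations :: "('a, 'b) ring_scheme \<Rightarrow> 'a set \<Rightarrow> 'a set list set" where
  "proper_factorizations R a =
     {us. (\<forall>u\<in>set us. u \<in> nz_ideals R \<and> u \<noteq> carrier R) \<and> a = list_prod (ideal_monoid R) us}"

context noetherian_domain begin

lemma carrier_in_nz_ideals: "carrier R \<in> nz_ideals R"
  unfolding nz_ideals_def using oneideal one_not_zero one_closed by blast

lemma ideal_prod_in_nz_ideals:
  assumes "A \<in> nz_ideals R" "B \<in> nz_ideals R"
  shows "A \<cdot> B \<in> nz_ideals R"
proof -
  have A: "ideal A R" and B: "ideal B R" using assms by (auto simp: nz_ideals_def)
  obtain a b where "a \<in> A" "a \<noteq> \<zero>" "b \<in> B" "b \<noteq> \<zero>"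
    using assms additive_subgroup.zero_closed[OF ideal.axioms(1)] by (auto simp: nz_ideals_def)
  then have "a \<otimes> b \<in> A \<cdot> B" "a \<otimes> b \<noteq> \<zero>"
    using ideal.Icarr[OF A] ideal.Icarr[OF B] integral by (auto intro: ideal_prod.prod)
  then show ?thesis using ideal_prod_is_ideal[OF A B] unfolding nz_ideals_def by blast
qed

lemma iprod_in_nz_ideals:
  "finite \<Omega> \<Longrightarrow> \<forall>j\<in>\<Omega>. J j \<in> nz_ideals R \<Longrightarrow> iprod R J \<Omega> \<in> nz_ideals R"
proof (induct \<Omega> rule: finite_induct)
  case empty
  then show ?case by (simp add: iprod_empty carrier_in_nz_ideals)
next
  case (insert x F)
  then have "iprod R J (insert x F) = J x \<cdot> iprod R J F"
    by (intro iprod_insert) (auto simp: nz_ideals_def)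
  then show ?case using insert ideal_prod_in_nz_ideals by auto
qed

lemma exists_prime_colon:
  assumes M: "ideal M R" "M \<noteq> carrier R"
  shows "\<exists>x0\<in>carrier R. x0 \<notin> M \<and> primeideal (colon R M x0) R"
proof -
  define G where "G = {colon R M x | x. x \<in> carrier R \<and> x \<notin> M}"
  have "\<one> \<notin> M" using ideal.one_imp_carrier[OF M(1)] M(2) by blast
  then have "G \<noteq> {}" unfolding G_def by blast
  moreover have "G \<subseteq> {I. ideal I R}" unfolding G_def using colon_ideal[OF M(1)] by blast
  ultimately obtain Q where "Q \<in> G" and Q_max: "\<forall>X\<in>G. Q \<subseteq> X \<longrightarrow> X = Q"
    using ideal_family_has_maximal by blast
  then obtain x0 where x0: "x0 \<in> carrier R" "x0 \<notin> M" and Q: "Q = colon R M x0"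
    unfolding G_def by blast
  have "primeideal (colon R M x0) R"
  proof (rule colon_maximal_primeideal[OF M(1) x0])
    fix x assume "x \<in> carrier R" "x \<notin> M" "colon R M x0 \<subseteq> colon R M x"
    then show "colon R M x = colon R M x0" using Q_max Q unfolding G_def by blast
  qed
  then show ?thesis using x0 by blast
qed

lemma omega'_finite:
  assumes "I \<in> nz_ideals R"
  shows "omega' R I < \<infinity>"
proof (rule ccontr)
  assume "\<not> omega' R I < \<infinity>"
  define F where "F = {A \<in> nz_ideals R. omega' R A = \<infinity>}"
  have "I \<in> F" using assms \<open>\<not> omega' R I < \<infinity>\<close> by (cases "omega' R I") (auto simp: F_def)
  moreover have "F \<subseteq> {I. ideal I R}" by (auto simp: F_def nz_ideals_def)
  ultimately obtain M where "M \<in> F" and M_max: "\<forall>X\<in>F. M \<subseteq> X \<longrightarrow> X = M"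
    using ideal_family_has_maximal by blast
  then have M: "ideal M R" "M \<noteq> {\<zero>}" and M_inf: "omega' R M = \<infinity>"
    by (auto simp: F_def nz_ideals_def)
  have "M \<noteq> carrier R"
  proof
    assume "M = carrier R"
    then show False using M_inf omega'_carrier by simp
  qed
  then obtain x0 where x0: "x0 \<in> carrier R" "x0 \<notin> M" and P: "primeideal (colon R M x0) R"
    using exists_prime_colon[OF M(1)] by blast
  define J where "J = M <+>\<^bsub>R\<^esub> PIdl x0"
  have J: "ideal J R" unfolding J_def using M(1) cgenideal_ideal[OF x0(1)] by (rule add_ideals)
  have "M \<union> PIdl x0 \<subseteq> J"
    using genideal_self[of "M \<union> PIdl x0"] union_genideal[OF M(1) cgenideal_ideal[OF x0(1)]]
      ideal.Icarr[OF M(1)] ideal.Icarr[OF cgenideal_ideal[OF x0(1)]]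
    unfolding J_def by blast
  then have "M \<subseteq> J" "x0 \<in> J" using cgenideal_self[OF x0(1)] by auto
  moreover have "\<zero> \<in> M" using additive_subgroup.zero_closed[OF ideal.axioms(1)[OF M(1)]] .
  ultimately have "J \<in> nz_ideals R" "J \<noteq> M"
    using J M(2) x0(2) unfolding nz_ideals_def by blast+
  then have "J \<notin> F" using M_max \<open>M \<subseteq> J\<close> by blast
  then have "omega' R J \<noteq> \<infinity>" using \<open>J \<in> nz_ideals R\<close> by (simp add: F_def)
  moreover have "omega' R M \<le> omega' R J + 1"
    using omega'_le_Suc[OF M(1) \<open>M \<subseteq> J\<close> P uniform_colon_set_add_cgenideal[OF M(1) x0(1) P, folded J_def]] .
  ultimately show False using M_inf by (cases "omega' R J") (auto simp: one_enat_def)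
qed

lemma comm_monoid_ideal_monoid: "comm_monoid (ideal_monoid R)"
proof (rule comm_monoidI, unfold ideal_monoid_simps)
  fix x y z assume "x \<in> nz_ideals R" "y \<in> nz_ideals R" "z \<in> nz_ideals R"
  then show "x \<cdot> y \<cdot> z = x \<cdot> (y \<cdot> z)" by (intro ideal_prod_assoc) (auto simp: nz_ideals_def)
next
  fix x assume "x \<in> nz_ideals R"
  then show "carrier R \<cdot> x = x"
    using ideal_prod_commute[OF oneideal, of x] ideal_prod_one[of x] by (simp add: nz_ideals_def)
next
  fix x y assume "x \<in> nz_ideals R" "y \<in> nz_ideals R"
  then show "x \<cdot> y = y \<cdot> x" by (intro ideal_prod_commute) (auto simp: nz_ideals_def)
qed (auto intro: ideal_prod_in_nz_ideals carrier_in_nz_ideals)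

lemma Units_ideal_monoid: "Units (ideal_monoid R) = {carrier R}"
proof
  show "Units (ideal_monoid R) \<subseteq> {carrier R}"
  proof
    fix y assume "y \<in> Units (ideal_monoid R)"
    then obtain x where y: "y \<in> nz_ideals R" and x: "x \<in> nz_ideals R" and xy: "x \<cdot> y = carrier R"
      unfolding Units_def ideal_monoid_simps by blast
    have "x \<cdot> y \<subseteq> y" using ideal_prod_inter x y by (auto simp: nz_ideals_def)
    then show "y \<in> {carrier R}" using xy y by (auto simp: nz_ideals_def dest: ideal.Icarr)
  qed
next
  show "{carrier R} \<subseteq> Units (ideal_monoid R)"
    unfolding Units_def ideal_monoid_simps using carrier_in_nz_ideals ideal_prod_one[OF oneideal] by auto
qed

lemma atom_ideal_monoid_iff:
  "atom (ideal_monoid R) u \<longleftrightarrow> u \<in> nz_ideals R \<and> u \<noteq> carrier R \<and>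
     (\<forall>x\<in>nz_ideals R. \<forall>y\<in>nz_ideals R. u = x \<cdot> y \<longrightarrow> x = carrier R \<or> y = carrier R)"
  unfolding atom_def Units_ideal_monoid ideal_monoid_simps by auto

lemma unit_cancellative_ideal_monoid: "unit_cancellative (ideal_monoid R)"
  unfolding unit_cancellative_def Units_ideal_monoid ideal_monoid_simps
  using ideal_prod_absorbs_imp_carrier by (auto simp: nz_ideals_def)

lemma list_prod_absorbs_unit:
  assumes "\<forall>u\<in>set us. ideal u R" "\<epsilon> \<in> Units (ideal_monoid R)"
  shows "\<epsilon> \<otimes>\<^bsub>ideal_monoid R\<^esub> list_prod (ideal_monoid R) us = list_prod (ideal_monoid R) us"
  using assms ideal_prod_commute[OF oneideal ideal_list_prod] ideal_prod_one[OF ideal_list_prod]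
  by (simp add: Units_ideal_monoid ideal_monoid_simps)

lemma length_proper_factorization_le_omega':
  assumes us: "us \<in> proper_factorizations R a"
  shows "enat (length us) \<le> omega' R a"
proof (cases "omega' R a")
  case (enat N)
  define n where "n = length us"
  define J where "J = (\<lambda>i. us ! (i - 1))"
  have J_in: "J i \<in> set us" if "i \<in> {1..n}" for i
    using that unfolding J_def n_def by (intro nth_mem) auto
  have nz: "\<forall>i\<in>{1..n}. J i \<in> nz_ideals R" and proper: "\<forall>i\<in>{1..n}. J i \<noteq> carrier R"
    using J_in us by (auto simp: proper_factorizations_def)
  have ids: "\<forall>i\<in>{1..n}. ideal (J i) R" using nz by (auto simp: nz_ideals_def)
  have a_eq: "iprod R J {1..n} = a"
    using iprod_nth_eq_list_prod[of us 0] us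
    by (auto simp: J_def n_def proper_factorizations_def nz_ideals_def)
  show ?thesis
  proof (cases "n = 0")
    case False
    then obtain \<Omega> where \<Omega>: "\<Omega> \<subseteq> {1..n}" "card \<Omega> \<le> N" "iprod R J \<Omega> \<subseteq> a"
      using omega_prop_omega'[OF enat] nz a_eq unfolding omega_prop_def
      by (metis enat_ord_simps(1) le_add1 order_refl plus_1_eq_Suc not0_implies_Suc)
    have "\<Omega> = {1..n}"
    proof (rule ccontr)
      assume "\<Omega> \<noteq> {1..n}"
      then obtain \<mu> where \<mu>: "\<mu> \<in> {1..n} - \<Omega>" using \<Omega>(1) by blast
      define C where "C = {1..n} - \<Omega>"
      have fin: "finite \<Omega>" "finite C" using \<Omega>(1) finite_subset unfolding C_def by auto
      have a_split: "a = iprod R J \<Omega> \<cdot> iprod R J C"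
        using iprod_union[of \<Omega> C J] fin ids a_eq \<Omega>(1) by (simp add: C_def Un_absorb1)
      \<comment> \<open>\<open>iprod R J \<Omega> \<subseteq> a\<close> makes the cofactor absorbed, hence trivial.\<close>
      have "iprod R J \<Omega> \<in> nz_ideals R" using iprod_in_nz_ideals[OF fin(1)] nz \<Omega>(1) by auto
      moreover have "ideal (iprod R J C) R" using ids fin(2) by (intro iprod_ideal) (auto simp: C_def)
      ultimately have "iprod R J C = carrier R"
        using ideal_prod_absorbs_imp_carrier \<Omega>(3) a_split by (auto simp: nz_ideals_def)
      moreover have "iprod R J C \<subseteq> J \<mu>" using \<mu> ids fin(2) by (intro iprod_subset_factor) (auto simp: C_def)
      moreover have "J \<mu> \<subseteq> carrier R" using ids \<mu> by (blast dest: ideal.Icarr)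
      ultimately show False using proper \<mu> by blast
    qed
    then show ?thesis using \<Omega>(2) enat n_def by simp
  qed (simp add: n_def zero_enat_def[symmetric])
qed simp

lemma lengths_le_omega':
  assumes "l \<in> lengths (ideal_monoid R) a"
  shows "enat l \<le> omega' R a"
proof -
  obtain us \<epsilon> where l: "l = length us" and \<epsilon>: "\<epsilon> \<in> Units (ideal_monoid R)"
    and atoms: "\<forall>u \<in> set us. atom (ideal_monoid R) u"
    and a: "a = \<epsilon> \<otimes>\<^bsub>ideal_monoid R\<^esub> list_prod (ideal_monoid R) us"
    using assms unfolding lengths_def by blast
  have "\<forall>u\<in>set us. u \<in> nz_ideals R \<and> u \<noteq> carrier R"
    using atoms by (simp add: atom_ideal_monoid_iff)
  moreover from this have "a = list_prod (ideal_monoid R) us"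
    using a list_prod_absorbs_unit[OF _ \<epsilon>] by (simp add: nz_ideals_def)
  ultimately have "us \<in> proper_factorizations R a" by (simp add: proper_factorizations_def)
  then show ?thesis using l length_proper_factorization_le_omega' by simp
qed

lemma proper_factorization_refine:
  assumes us: "us \<in> proper_factorizations R a" and u: "u \<in> set us"
    and not_atom: "\<not> atom (ideal_monoid R) u"
  shows "\<exists>vs \<in> proper_factorizations R a. length vs = Suc (length us)"
proof -
  obtain b c where b: "b \<in> nz_ideals R" "b \<noteq> carrier R" and c: "c \<in> nz_ideals R" "c \<noteq> carrier R"
    and u_eq: "u = b \<cdot> c"
    using not_atom u us by (auto simp: atom_ideal_monoid_iff proper_factorizations_def)
  obtain xs ys where split: "us = xs @ u # ys" using split_list[OF u] by blast
  have "ideal (list_prod (ideal_monoid R) ys) R"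
    using us split by (intro ideal_list_prod) (auto simp: proper_factorizations_def nz_ideals_def)
  then have "list_prod (ideal_monoid R) (b # c # ys) = list_prod (ideal_monoid R) (u # ys)"
    using b c u_eq by (simp add: list_prod_ideal_monoid_simps ideal_prod_assoc nz_ideals_def)
  then have "list_prod (ideal_monoid R) (xs @ b # c # ys) = list_prod (ideal_monoid R) us"
    unfolding split by (induct xs) (auto simp: list_prod_ideal_monoid_simps)
  then have "xs @ b # c # ys \<in> proper_factorizations R a"
    using us b c split by (auto simp: proper_factorizations_def)
  then show ?thesis using split by (intro bexI[of _ "xs @ b # c # ys"]) auto
qed

lemma lengths_nonempty:
  assumes a: "a \<in> nz_ideals R"
  shows "lengths (ideal_monoid R) a \<noteq> {}"
proof -
  obtain N where N: "omega' R a = enat N" using omega'_finite[OF a] by (cases "omega' R a") auto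
  define S where "S = length ` proper_factorizations R a"
  have fin: "finite S"
    using length_proper_factorization_le_omega' N finite_subset[of S "{..N}"] by (force simp: S_def)
  have "(if a = carrier R then [] else [a]) \<in> proper_factorizations R a"
    using a by (auto simp: proper_factorizations_def list_prod_ideal_monoid_simps ideal_prod_one nz_ideals_def)
  then have "S \<noteq> {}" by (auto simp: S_def)
  then have "Max S \<in> length ` proper_factorizations R a"
    using Max_in[OF fin] unfolding S_def by blast
  then obtain us where us: "us \<in> proper_factorizations R a" and len: "Max S = length us"
    by (rule imageE)
  \<comment> \<open>A proper factorization of maximal length cannot be refined, so it consists of atoms.\<close>
  have "\<forall>u\<in>set us. atom (ideal_monoid R) u"
    using proper_factorization_refine[OF us] Max_ge[OF fin] len by (fastforce simp: S_def)
  moreover have "a = carrier R \<otimes>\<^bsub>ideal_monoid R\<^esub> list_prod (ideal_monoid R) us"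
    using us list_prod_absorbs_unit[of us "carrier R"] Units_ideal_monoid
    by (auto simp: proper_factorizations_def nz_ideals_def)
  ultimately have "length us \<in> lengths (ideal_monoid R) a"
    unfolding lengths_def Units_ideal_monoid by blast
  then show ?thesis by blast
qed

lemma BF_monoid_ideal_monoid: "BF_monoid (ideal_monoid R)"
  unfolding BF_monoid_def
proof (intro conjI ballI comm_monoid_ideal_monoid unit_cancellative_ideal_monoid)
  fix a assume "a \<in> carrier (ideal_monoid R)"
  then have a: "a \<in> nz_ideals R" by (simp add: ideal_monoid_simps)
  obtain N where "omega' R a = enat N" using omega'_finite[OF a] by (cases "omega' R a") auto
  then have "lengths (ideal_monoid R) a \<subseteq> {..N}" using lengths_le_omega' by fastforce
  then show "finite (lengths (ideal_monoid R) a)" using finite_subset by blast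
  show "lengths (ideal_monoid R) a \<noteq> {}" using lengths_nonempty[OF a] .
qed

end

theorem proposition2p2:
  fixes R :: "('a, 'b) ring_scheme" and I :: "'a set"
  assumes "noetherian_domain R"
    and "I \<in> nz_ideals R"
  shows "(\<forall>J P. J \<in> nz_ideals R \<longrightarrow> I \<subseteq> J \<longrightarrow> primeideal P R \<longrightarrow> quot_iso_RP R I J P
            \<longrightarrow> omega' R I \<le> omega' R J + 1)
       \<and> omega' R I < \<infinity>
       \<and> Sup (enat ` lengths (ideal_monoid R) I) \<le> omega' R I
       \<and> BF_monoid (ideal_monoid R)"
proof -
  interpret noetherian_domain R by fact
  have "omega' R I \<le> omega' R J + 1"
    if "J \<in> nz_ideals R" "I \<subseteq> J" "primeideal P R" "quot_iso_RP R I J P" for J P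
    using that assms(2) omega'_le_Suc quot_iso_RP_imp_uniform_colon by (simp add: nz_ideals_def)
  moreover have "Sup (enat ` lengths (ideal_monoid R) I) \<le> omega' R I"
    using lengths_le_omega' by (auto intro: Sup_least)
  ultimately show ?thesis using omega'_finite[OF assms(2)] BF_monoid_ideal_monoid by blast
qed

end
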